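(* For every permutation $\sigma$ and every Cayley permutation $y$, $$\mathcal{F}(\sigma)=\gamma\bigl(\mathrm{Modasc}[\sigma^{-1}]\bigr)\qquad\text{and}\qquad \gamma\bigl(\mathrm{Modasc}[y]\bigr)=\mathcal{F}\bigl(\gamma(y)\bigr).$$ In other words, the set of Fishburn permutations avoiding $\sigma$ is the image under $\gamma$ of the set of modified ascent sequences avoiding every Cayley permutation in the class $[\sigma^{-1}]$.
   Context: A Cayley permutation of length $n$ is a word $x=x(1)\cdots x(n)$ of positive integers in which every integer from $1$ to $\max(x)$ occurs (the empty word is the unique one of length $0$); $\mathrm{Cay}_n$ is the set of these and $\mathrm{Cay}=\bigcup_n\mathrm{Cay}_n$. Permutations of $[n]$ (in one-line notation) are exactly the Cayley permutations without repeated letters; $\mathcal{S}$ denotes the set of all permutations. A Cayley permutation $y$ of length $k$ is contained in $x$ of length $n$ (written $y\le x$) if there are indices $i_1<\dots<i_k$ with $x(i_s)<x(i_t)\iff y(s)<y(t)$ and $x(i_s)=x(i_t)\iff y(s)=y(t)$ for all $s,t$; otherwise $x$ avoids $y$. For $E\subseteq\mathrm{Cay}$ and a set $P$ of patterns, $E(P)$ is the set of elements of $E$ avoiding every pattern in $P$. For $x\in\mathrm{Cay}_n$, $\gamma(x)\in\mathcal{S}_n$ is obtained by sorting the pairs $(x(i),i)$, $i=1,\dots,n$, in increasing order of first coordinate, breaking ties by decreasing order of second coordinate, and reading off the second coordinates. (For a permutation $\pi$, $\gamma(\pi)=\pi^{-1}$.) Write $x\sim y$ iff $\gamma(x)=\gamma(y)$,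 and let $[y]$ be the equivalence class of $y$. For $E\subseteq\mathrm{Cay}$ and $y\in\mathrm{Cay}$, $E[y]$ denotes the set of $x\in E$ that avoid every element of $[y]$; $\gamma(E)=\{\gamma(x):x\in E\}$. Modified ascent sequences: $\mathrm{Modasc}_0=\{\text{empty word}\}$, $\mathrm{Modasc}_1=\{1\}$, and for $n\ge2$, $x\in\mathrm{Modasc}_n$ iff there is $v\in\mathrm{Modasc}_{n-1}$ with last letter $b$ such that either $x=va$ with $1\le a\le b$, or $x=\tilde v a$ with $b<a\le 2+\mathrm{asc}(v)$, where $\mathrm{asc}(v)$ is the number of $i$ with $v(i)<v(i+1)$ and $\tilde v$ is obtained from $v$ by increasing by one every entry $c\ge a$. $\mathrm{Modasc}=\bigcup_n\mathrm{Modasc}_n\subseteq\mathrm{Cay}$. Fishburn permutations: a permutation $\pi$ of $[n]$ is Fishburn if there are no indices $i$ and $k>i+1$ with $\pi(i)<\pi(i+1)$ and $\pi(k)=\pi(i)-1$ (i.e. $\pi$ avoids the bivincular pattern $(231,\{1\},\{1\})$). $\mathcal{F}$ is the set of Fishburn permutations, and $\mathcal{F}(\sigma)$ the set of those avoiding $\sigma$. (The restriction of $\gamma$ to $\mathrm{Modasc}$ is a bijection onto $\mathcal{F}$.) *)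

theory Defs
  imports Main "HOL-Library.Product_Lexorder"
begin

text \<open>Words are lists of naturals; position i (0-based) of the list is x(i+1).\<close>

definition cay :: "nat list \<Rightarrow> bool" where
  "cay x \<longleftrightarrow> 0 \<notin> set x \<and> (\<forall>k. 1 \<le> k \<and> k \<le> Max (insert 0 (set x)) \<longrightarrow> k \<in> set x)"

definition Cay :: "nat list set" where
  "Cay = {x. cay x}"

definition is_perm :: "nat list \<Rightarrow> bool" where
  "is_perm x \<longleftrightarrow> cay x \<and> distinct x"

definition contains :: "nat list \<Rightarrow> nat list \<Rightarrow> bool" where
  "contains y x \<longleftrightarrow> (\<exists>is. length is = length y \<and> sorted_wrt (<) is \<and> (\<forall>j\<in>set is. j < length x) \<and>
     (\<forall>s<length y. \<forall>t<length y.
        (x ! (is ! s) < x ! (is ! t) \<longleftrightarrow> y ! s < y ! t) \<and>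
        (x ! (is ! s) = x ! (is ! t) \<longleftrightarrow> y ! s = y ! t)))"

definition avoids :: "nat list \<Rightarrow> nat list \<Rightarrow> bool" where
  "avoids x y \<longleftrightarrow> \<not> contains y x"

text \<open>gamma: sort pairs (x(i), i) by first coordinate increasingly, ties by decreasing i,
  and read off the (1-based) indices.\<close>
definition gamma :: "nat list \<Rightarrow> nat list" where
  "gamma x = map Suc (sort_key (\<lambda>i. (x ! i, length x - i)) [0..<length x])"

definition cls :: "nat list \<Rightarrow> nat list set" where
  "cls y = {z \<in> Cay. gamma z = gamma y}"

definition avoid_cls :: "nat list set \<Rightarrow> nat list \<Rightarrow> nat list set" where
  "avoid_cls E y = {x \<in> E. \<forall>z \<in> cls y. avoids x z}"

definition perm_inv :: "nat list \<Rightarrow> nat list" where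
  "perm_inv p = map (\<lambda>j. Suc (THE i. i < length p \<and> p ! i = j)) [1..<Suc (length p)]"

definition asc :: "nat list \<Rightarrow> nat" where
  "asc v = card {i. Suc i < length v \<and> v ! i < v ! Suc i}"

definition incr_from :: "nat \<Rightarrow> nat list \<Rightarrow> nat list" where
  "incr_from a v = map (\<lambda>c. if a \<le> c then c + 1 else c) v"

fun modasc :: "nat \<Rightarrow> nat list set" where
  "modasc 0 = {[]}"
| "modasc (Suc 0) = {[1]}"
| "modasc (Suc (Suc n)) = {x. \<exists>v \<in> modasc (Suc n). \<exists>a.
      (1 \<le> a \<and> a \<le> last v \<and> x = v @ [a]) \<or>
      (last v < a \<and> a \<le> 2 + asc v \<and> x = incr_from a v @ [a])}"

definition Modasc :: "nat list set" where
  "Modasc = (\<Union>n. modasc n)"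

definition fishburn :: "nat list \<Rightarrow> bool" where
  "fishburn p \<longleftrightarrow> is_perm p \<and>
     \<not> (\<exists>i k. Suc i < k \<and> k < length p \<and> p ! i < p ! Suc i \<and> p ! k + 1 = p ! i)"

definition Fish_av :: "nat list \<Rightarrow> nat list set" where
  "Fish_av \<sigma> = {p. fishburn p \<and> avoids p \<sigma>}"

end

theory Submission
  imports Defs
begin

(* Let gamma0 x be the 0-based version of gamma x: the positions of x listed by increasing letter,
   ties from right to left.

   In a modified ascent sequence the largest letter is 1 + asc, and the first occurrences of
   letters sit exactly at the first position and at the tops of ascents. So if gamma0 x contained
   the Fishburn pattern, an ascent p < q followed later by p - 1, then p would be a first
   occurrence (an earlier copy of x(p) would be listed after p, hence after q, although
   x(q) > x(p)) that is not the top of an ascent (p - 1 is listed after p).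

   Conversely, write a Fishburn permutation of 0..n+1 as A @ (n+1) # B. Then A @ B is Fishburn,
   so by induction A @ B = gamma0 v for a modified ascent sequence v. The Fishburn condition makes
   last A a first occurrence in v; hence the letters of v at positions in A are at most v(last A)
   and those at positions in B exceed it. Appending the letter 1 + v(last A) (or 1 if A = [],
   shifting the larger letters by incr_from when needed) gives a modified ascent sequence whose
   gamma0 is A @ (n+1) # B.

   For patterns, gamma0 of the subsequence of x at increasing positions ix is gamma0 x restricted
   to ix and relabelled. So z <= x implies gamma z <= gamma x; conversely an occurrence of gamma y
   in gamma x picks out positions of x whose standardization z has gamma z = gamma y, because
   order-equivalent permutations are equal. Finally gamma (perm_inv sigma) = sigma. *)

section \<open>The permutation gamma\<close>

lemma sorted_wrt_key_unique:
  fixes f :: "'a \<Rightarrow> 'b::linorder"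
  assumes "inj_on f (set xs)" "set ys = set xs"
    and "sorted_wrt (\<lambda>i j. f i < f j) xs" "sorted_wrt (\<lambda>i j. f i < f j) ys"
  shows "ys = xs"
proof -
  have "map f ys = map f xs"
    using assms(2-4) by (intro strict_sorted_equal) (simp_all add: sorted_wrt_map)
  then show ?thesis
    using assms(1,2) by (simp add: inj_on_map_eq_map)
qed

lemma sorted_wrt_nth_less_iff:
  fixes f :: "'a \<Rightarrow> 'b::linorder"
  assumes "sorted_wrt (\<lambda>i j. f i < f j) L" "s < length L" "t < length L"
  shows "f (L ! s) < f (L ! t) \<longleftrightarrow> s < t"
  using assms sorted_wrt_nth_less[OF assms(1)]
  by (metis less_asym linorder_neqE_nat)

definition gamma_key :: "nat list \<Rightarrow> nat \<Rightarrow> nat \<times> nat" where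
  "gamma_key x i = (x ! i, length x - i)"

definition gamma0 :: "nat list \<Rightarrow> nat list" where
  "gamma0 x = sort_key (gamma_key x) [0..<length x]"

lemma gamma_eq_map_Suc_gamma0: "gamma x = map Suc (gamma0 x)"
  unfolding gamma_def gamma0_def gamma_key_def by simp

lemma gamma_key_less_iff:
  "i < length x \<Longrightarrow> j < length x \<Longrightarrow>
   gamma_key x i < gamma_key x j \<longleftrightarrow> x ! i < x ! j \<or> (x ! i = x ! j \<and> j < i)"
  unfolding gamma_key_def by auto

lemma inj_on_gamma_key: "inj_on (gamma_key x) {0..<length x}"
  by (auto simp: inj_on_def gamma_key_def)

lemma set_gamma0 [simp]: "set (gamma0 x) = {0..<length x}"
  unfolding gamma0_def by simp

lemma length_gamma0 [simp]: "length (gamma0 x) = length x"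
  unfolding gamma0_def by simp

lemma distinct_gamma0 [simp]: "distinct (gamma0 x)"
  unfolding gamma0_def by simp

lemma length_gamma [simp]: "length (gamma x) = length x"
  by (simp add: gamma_eq_map_Suc_gamma0)

lemma nth_gamma: "i < length x \<Longrightarrow> gamma x ! i = Suc (gamma0 x ! i)"
  by (simp add: gamma_eq_map_Suc_gamma0)

lemma gamma0_nth_less_length: "s < length x \<Longrightarrow> gamma0 x ! s < length x"
  using nth_mem[of s "gamma0 x"] by simp

lemma sorted_wrt_gamma0: "sorted_wrt (\<lambda>i j. gamma_key x i < gamma_key x j) (gamma0 x)"
proof -
  have "distinct (map (gamma_key x) (gamma0 x))"
    using inj_on_gamma_key by (simp add: distinct_map)
  moreover have "sorted (map (gamma_key x) (gamma0 x))"
    unfolding gamma0_def by simp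
  ultimately have "sorted_wrt (<) (map (gamma_key x) (gamma0 x))"
    by (simp add: strict_sorted_iff)
  then show ?thesis
    by (simp add: sorted_wrt_map)
qed

lemma gamma0_eqI:
  assumes "set L = {0..<length x}" "sorted_wrt (\<lambda>i j. gamma_key x i < gamma_key x j) L"
  shows "gamma0 x = L"
  using inj_on_gamma_key assms sorted_wrt_gamma0 by (intro sorted_wrt_key_unique) simp_all

lemma gamma0_nth_less_iff:
  "s < length x \<Longrightarrow> t < length x \<Longrightarrow>
   gamma_key x (gamma0 x ! s) < gamma_key x (gamma0 x ! t) \<longleftrightarrow> s < t"
  using sorted_wrt_nth_less_iff[OF sorted_wrt_gamma0] by simp

lemma gamma0_snoc:
  assumes "gamma0 w = A @ B" "\<forall>i\<in>set A. w ! i < a" "\<forall>j\<in>set B. a \<le> w ! j"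
  shows "gamma0 (w @ [a]) = A @ length w # B"
proof (rule gamma0_eqI)
  let ?x = "w @ [a]"
  have AB: "set (A @ B) = {0..<length w}"
    using set_gamma0[of w] assms(1) by simp
  then show "set (A @ length w # B) = {0..<length ?x}"
    by (simp add: atLeastLessThanSuc)
  have lt: "i < length w" if "i \<in> set A \<union> set B" for i
    using AB that by auto
  have key: "gamma_key ?x i < gamma_key ?x j \<longleftrightarrow> gamma_key w i < gamma_key w j"
    if "i < length w" "j < length w" for i j
    using that gamma_key_less_iff[of i ?x j] gamma_key_less_iff[of i w j] by (simp add: nth_append)
  have "sorted_wrt (\<lambda>i j. gamma_key w i < gamma_key w j) (A @ B)"
    using sorted_wrt_gamma0[of w] assms(1) by simp
  then have "sorted_wrt (\<lambda>i j. gamma_key ?x i < gamma_key ?x j) (A @ B)"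
    by (rule sorted_wrt_mono_rel[rotated]) (use lt key in simp)
  moreover have "gamma_key ?x i < gamma_key ?x (length w)" if "i \<in> set A" for i
    using that lt[of i] assms(2) gamma_key_less_iff[of i ?x "length w"] by (simp add: nth_append)
  moreover have "gamma_key ?x (length w) < gamma_key ?x j" if "j \<in> set B" for j
    using that lt[of j] assms(3) gamma_key_less_iff[of "length w" ?x j]
    by (simp add: nth_append le_less)
  ultimately show "sorted_wrt (\<lambda>i j. gamma_key ?x i < gamma_key ?x j) (A @ length w # B)"
    by (auto simp: sorted_wrt_append)
qed

lemma gamma_key_less_last:
  assumes "gamma0 v = A @ B" "A \<noteq> []"
  shows "i \<in> set A \<Longrightarrow> i \<noteq> last A \<Longrightarrow> gamma_key v i < gamma_key v (last A)"
    and "j \<in> set B \<Longrightarrow> gamma_key v (last A) < gamma_key v j"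
proof -
  have A_eq: "A = butlast A @ [last A]"
    using assms(2) by simp
  then have sorted: "sorted_wrt (\<lambda>i j. gamma_key v i < gamma_key v j) (butlast A @ [last A] @ B)"
    using sorted_wrt_gamma0[of v] assms(1) by (metis append_assoc)
  have "set A = set (butlast A @ [last A])"
    using A_eq by (rule arg_cong)
  then show "i \<in> set A \<Longrightarrow> i \<noteq> last A \<Longrightarrow> gamma_key v i < gamma_key v (last A)"
    using sorted by (simp add: sorted_wrt_append)
  show "j \<in> set B \<Longrightarrow> gamma_key v (last A) < gamma_key v j"
    using sorted by (simp add: sorted_wrt_append)
qed

section \<open>Order-equivalent words\<close>

definition order_equiv :: "'a::linorder list \<Rightarrow> 'a list \<Rightarrow> bool" where
  "order_equiv w v \<longleftrightarrow> length w = length v \<and>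
     (\<forall>i<length v. \<forall>j<length v. w ! i < w ! j \<longleftrightarrow> v ! i < v ! j)"

lemma order_equiv_nth_less_iff:
  "order_equiv w v \<Longrightarrow> i < length v \<Longrightarrow> j < length v \<Longrightarrow> w ! i < w ! j \<longleftrightarrow> v ! i < v ! j"
  unfolding order_equiv_def by blast

lemma order_equiv_nth_eq_iff:
  assumes "order_equiv w v" "i < length v" "j < length v"
  shows "w ! i = w ! j \<longleftrightarrow> v ! i = v ! j"
  using order_equiv_nth_less_iff[OF assms] order_equiv_nth_less_iff[OF assms(1,3,2)]
  by (metis linorder_neqE less_irrefl)

lemma order_equiv_sym: "order_equiv w v \<Longrightarrow> order_equiv v w"
  unfolding order_equiv_def by simp

lemma order_equiv_trans: "order_equiv u v \<Longrightarrow> order_equiv v w \<Longrightarrow> order_equiv u w"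
  unfolding order_equiv_def by simp

lemma order_equiv_map:
  assumes "strict_mono_on (set xs) f"
  shows "order_equiv (map f xs) xs"
  unfolding order_equiv_def
  using strict_mono_on_less[OF assms] by simp

lemma order_equiv_map_Suc_iff: "order_equiv (map Suc u) (map Suc v) \<longleftrightarrow> order_equiv u v"
proof -
  have "order_equiv (map Suc u) u" "order_equiv (map Suc v) v"
    by (simp_all add: order_equiv_map strict_mono_onI)
  then show ?thesis
    using order_equiv_sym order_equiv_trans by meson
qed

lemma order_equiv_incr_from: "order_equiv (incr_from a v) v"
  unfolding incr_from_def by (rule order_equiv_map) (auto simp: strict_mono_on_def)

lemma asc_order_equiv: "order_equiv w v \<Longrightarrow> asc w = asc v"
  unfolding asc_def order_equiv_def by (metis Suc_lessD)

lemma gamma_key_order_equiv: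
  assumes "order_equiv w v" "i < length v" "j < length v"
  shows "gamma_key w i < gamma_key w j \<longleftrightarrow> gamma_key v i < gamma_key v j"
  using assms gamma_key_less_iff[of i w j] gamma_key_less_iff[of i v j]
    order_equiv_nth_less_iff[OF assms] order_equiv_nth_eq_iff[OF assms]
  by (simp add: order_equiv_def)

lemma gamma0_order_equiv:
  assumes "order_equiv w v"
  shows "gamma0 w = gamma0 v"
proof (rule gamma0_eqI)
  have "length w = length v"
    using assms by (simp add: order_equiv_def)
  then show "set (gamma0 v) = {0..<length w}"
    by simp
  show "sorted_wrt (\<lambda>i j. gamma_key w i < gamma_key w j) (gamma0 v)"
    using sorted_wrt_gamma0[of v]
    by (rule sorted_wrt_mono_rel[rotated]) (simp add: gamma_key_order_equiv[OF assms])
qed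

lemma perm_nth_eq_card_less:
  assumes "distinct G" "set G = {0..<length G}" "i < length G"
  shows "G ! i = card {j. j < length G \<and> G ! j < G ! i}"
proof -
  have "G ! i \<in> {0..<length G}"
    using assms(2,3) nth_mem by blast
  have "(!) G ` {j. j < length G \<and> G ! j < G ! i} = {0..<G ! i}"
  proof (intro equalityI subsetI)
    fix v assume v: "v \<in> {0..<G ! i}"
    then have "v \<in> set G"
      using assms(2) \<open>G ! i \<in> {0..<length G}\<close> by simp
    then obtain j where "j < length G" "G ! j = v"
      by (auto simp: in_set_conv_nth)
    then show "v \<in> (!) G ` {j. j < length G \<and> G ! j < G ! i}"
      using v by auto
  qed auto
  moreover have "inj_on ((!) G) {j. j < length G \<and> G ! j < G ! i}"
    using assms(1) by (auto simp: inj_on_def nth_eq_iff_index_eq)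
  ultimately show ?thesis
    using card_image by fastforce
qed

lemma order_equiv_perm_eq:
  assumes "order_equiv G H" "distinct G" "set G = {0..<length G}" "distinct H" "set H = {0..<length H}"
  shows "G = H"
proof (rule nth_equalityI)
  show "length G = length H"
    using assms(1) by (simp add: order_equiv_def)
  then show "G ! i = H ! i" if "i < length G" for i
  proof -
    have "{j. j < length G \<and> G ! j < G ! i} = {j. j < length H \<and> H ! j < H ! i}"
      using order_equiv_nth_less_iff[OF assms(1) _ that[unfolded \<open>length G = length H\<close>]]
        \<open>length G = length H\<close> by auto
    then show ?thesis
      using perm_nth_eq_card_less[OF assms(2,3) that] perm_nth_eq_card_less[OF assms(4,5)] that
        \<open>length G = length H\<close> by simp
  qed
qed

section \<open>Modified ascent sequences\<close>

lemma Max_insert_0_atLeastAtMost: "Max (insert 0 {1..M}) = (M::nat)"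
  by (cases M) (auto intro!: Max_eqI)

lemma cay_iff_set_eq: "cay x \<longleftrightarrow> (\<exists>M. set x = {1..M})"
proof
  assume "cay x"
  then have "set x = {1..Max (insert 0 (set x))}"
    unfolding cay_def by (auto simp: Suc_le_eq)
  then show "\<exists>M. set x = {1..M}" ..
next
  assume "\<exists>M. set x = {1..M}"
  then obtain M where "set x = {1..M}" ..
  then show "cay x"
    unfolding cay_def using Max_insert_0_atLeastAtMost[of M] by auto
qed

definition first_occurrence :: "'a list \<Rightarrow> nat \<Rightarrow> bool" where
  "first_occurrence x p \<longleftrightarrow> (\<forall>q<p. x ! q \<noteq> x ! p)"

definition first_occurrences_at_ascents :: "nat list \<Rightarrow> bool" where
  "first_occurrences_at_ascents x \<longleftrightarrow>
     (\<forall>p<length x. first_occurrence x p \<longleftrightarrow> p = 0 \<or> x ! (p - 1) < x ! p)"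

(* An invariant of the recursion defining modasc. *)
definition modasc_shape :: "nat list \<Rightarrow> bool" where
  "modasc_shape x \<longleftrightarrow> first_occurrences_at_ascents x \<and>
     (\<exists>M. set x = {1..M} \<and> (x \<noteq> [] \<longrightarrow> M = Suc (asc x)))"

lemma modasc_shapeI:
  assumes "first_occurrences_at_ascents x" "set x = {1..M}" "x \<noteq> []" "M = Suc (asc x)"
  shows "modasc_shape x"
  using assms unfolding modasc_shape_def by blast

lemma modasc_shapeE:
  assumes "modasc_shape x" "x \<noteq> []"
  obtains M where "first_occurrences_at_ascents x" "set x = {1..M}" "M = Suc (asc x)"
  using assms unfolding modasc_shape_def by blast

lemma first_occurrences_at_ascents_order_equiv:
  assumes "order_equiv w v"
  shows "first_occurrences_at_ascents w \<longleftrightarrow> first_occurrences_at_ascents v"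
proof -
  have "first_occurrence w p \<longleftrightarrow> first_occurrence v p" if "p < length v" for p
    using order_equiv_nth_eq_iff[OF assms] that unfolding first_occurrence_def by auto
  moreover have "w ! (p - 1) < w ! p \<longleftrightarrow> v ! (p - 1) < v ! p" if "p < length v" for p
    using order_equiv_nth_less_iff[OF assms] that by simp
  ultimately show ?thesis
    using assms unfolding first_occurrences_at_ascents_def order_equiv_def by simp
qed

lemma first_occurrences_at_ascents_snoc:
  assumes "first_occurrences_at_ascents w" "w \<noteq> []" "a \<notin> set w \<longleftrightarrow> last w < a"
  shows "first_occurrences_at_ascents (w @ [a])"
  unfolding first_occurrences_at_ascents_def
proof (intro allI impI)
  fix p assume p: "p < length (w @ [a])"
  show "first_occurrence (w @ [a]) p \<longleftrightarrow> p = 0 \<or> (w @ [a]) ! (p - 1) < (w @ [a]) ! p"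
  proof (cases "p < length w")
    case True
    then have "first_occurrence (w @ [a]) p \<longleftrightarrow> first_occurrence w p"
      unfolding first_occurrence_def by (simp add: nth_append)
    moreover have "(w @ [a]) ! (p - 1) = w ! (p - 1)" "(w @ [a]) ! p = w ! p"
      using True by (auto simp: nth_append)
    ultimately show ?thesis
      using assms(1) True unfolding first_occurrences_at_ascents_def by simp
  next
    case False
    then have p_eq: "p = length w" using p by simp
    have "first_occurrence (w @ [a]) p \<longleftrightarrow> a \<notin> set w"
      unfolding first_occurrence_def p_eq by (auto simp: nth_append in_set_conv_nth)
    moreover have "(w @ [a]) ! (p - 1) = last w"
      using p_eq assms(2) by (simp add: nth_append last_conv_nth)
    ultimately show ?thesis
      using assms(2,3) p_eq by (simp add: nth_append)
  qed
qed

lemma asc_snoc: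
  assumes "v \<noteq> []"
  shows "asc (v @ [a]) = asc v + (if last v < a then 1 else 0)"
proof -
  let ?A = "\<lambda>w. {i. Suc i < length w \<and> w ! i < w ! Suc i}"
  have "?A (v @ [a]) = ?A v \<union> {i. i = length v - 1 \<and> last v < a}"
  proof (intro set_eqI iffI)
    fix i assume i: "i \<in> ?A (v @ [a])"
    show "i \<in> ?A v \<union> {i. i = length v - 1 \<and> last v < a}"
    proof (cases "Suc i < length v")
      case False
      then have "i = length v - 1" using i by auto
      then show ?thesis using i assms by (simp add: nth_append last_conv_nth)
    qed (use i in \<open>simp add: nth_append\<close>)
  qed (use assms in \<open>auto simp: nth_append last_conv_nth\<close>)
  moreover have "finite (?A v)" "length v - 1 \<notin> ?A v"
    by (auto intro: finite_subset[of _ "{..<length v}"])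
  ultimately show ?thesis
    unfolding asc_def by simp
qed

lemma set_incr_from_snoc:
  assumes "set v = {1..M}" "1 \<le> a" "a \<le> Suc M"
  shows "set (incr_from a v @ [a]) = {1..Suc M}"
proof -
  let ?f = "\<lambda>c::nat. if a \<le> c then c + 1 else c"
  have img: "set (incr_from a v @ [a]) = insert a (?f ` {1..M})"
    using assms(1) by (simp add: incr_from_def)
  have "{1..Suc M} \<subseteq> insert a (?f ` {1..M})"
  proof
    fix k assume k: "k \<in> {1..Suc M}"
    consider "k < a" | "k = a" | "a < k" by linarith
    then show "k \<in> insert a (?f ` {1..M})"
    proof cases
      case 1
      then have "k = ?f k" "k \<in> {1..M}" using k assms(3) by auto
      then show ?thesis by blast
    next
      case 3
      then have "k = ?f (k - 1)" "k - 1 \<in> {1..M}" using k assms(2) by auto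
      then show ?thesis by blast
    qed simp
  qed
  moreover have "?f ` {1..M} \<subseteq> {1..Suc M}" "a \<in> {1..Suc M}"
    using assms(2,3) by auto
  ultimately show ?thesis
    unfolding img by blast
qed

lemma modasc_shape_snoc_le:
  assumes "modasc_shape v" "v \<noteq> []" "1 \<le> a" "a \<le> last v"
  shows "modasc_shape (v @ [a])"
proof -
  obtain M where v: "first_occurrences_at_ascents v" "set v = {1..M}" "M = Suc (asc v)"
    using assms(1,2) by (rule modasc_shapeE)
  have "last v \<in> {1..M}"
    using last_in_set[OF assms(2)] v(2) by blast
  then have "a \<in> set v"
    using v(2) assms(3,4) by simp
  show ?thesis
  proof (rule modasc_shapeI)
    show "first_occurrences_at_ascents (v @ [a])"
      using v(1) assms(2,4) \<open>a \<in> set v\<close> by (intro first_occurrences_at_ascents_snoc) auto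
    show "set (v @ [a]) = {1..M}"
      using v(2) \<open>a \<in> set v\<close> by (simp add: insert_absorb)
    show "M = Suc (asc (v @ [a]))"
      using asc_snoc[OF assms(2)] assms(4) v(3) by simp
  qed simp
qed

lemma modasc_shape_snoc_incr_from:
  assumes "modasc_shape v" "v \<noteq> []" "last v < a" "a \<le> 2 + asc v"
  shows "modasc_shape (incr_from a v @ [a])"
proof -
  obtain M where v: "first_occurrences_at_ascents v" "set v = {1..M}" "M = Suc (asc v)"
    using assms(1,2) by (rule modasc_shapeE)
  let ?w = "incr_from a v"
  have w: "?w \<noteq> []" "last ?w = last v" "a \<notin> set ?w"
    using assms(2,3) by (auto simp: incr_from_def last_map)
  show ?thesis
  proof (rule modasc_shapeI)
    show "first_occurrences_at_ascents (?w @ [a])"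
      using v(1) w assms(3) first_occurrences_at_ascents_order_equiv[OF order_equiv_incr_from]
      by (intro first_occurrences_at_ascents_snoc) simp_all
    show "set (?w @ [a]) = {1..Suc M}"
      using set_incr_from_snoc v(2,3) assms(3,4) by simp
    show "Suc M = Suc (asc (?w @ [a]))"
      using asc_snoc[OF w(1)] w(2) assms(3) asc_order_equiv[OF order_equiv_incr_from] v(3)
      by simp
  qed simp
qed

lemma modasc_length: "x \<in> modasc n \<Longrightarrow> length x = n"
  by (induction n arbitrary: x rule: modasc.induct) (auto simp: incr_from_def)

lemma modasc_imp_modasc_shape: "x \<in> modasc n \<Longrightarrow> modasc_shape x"
proof (induction n arbitrary: x rule: modasc.induct)
  case 1
  then show ?case
    unfolding modasc_shape_def first_occurrences_at_ascents_def by (intro conjI exI[of _ 0]) auto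
next
  case 2
  then show ?case
    by (intro modasc_shapeI[where M = 1])
      (auto simp: first_occurrences_at_ascents_def first_occurrence_def asc_def)
next
  case (3 n)
  then obtain v a where v: "v \<in> modasc (Suc n)" and
    "(1 \<le> a \<and> a \<le> last v \<and> x = v @ [a]) \<or>
     (last v < a \<and> a \<le> 2 + asc v \<and> x = incr_from a v @ [a])"
    by auto
  moreover have "modasc_shape v" "v \<noteq> []"
    using 3 v modasc_length[OF v] by auto
  ultimately show ?case
    using modasc_shape_snoc_le modasc_shape_snoc_incr_from by blast
qed

section \<open>Fishburn permutations are the images of modified ascent sequences\<close>

definition fishburn_free :: "nat list \<Rightarrow> bool" where
  "fishburn_free L \<longleftrightarrow>
     \<not> (\<exists>i k. Suc i < k \<and> k < length L \<and> L ! i < L ! Suc i \<and> L ! k + 1 = L ! i)"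

lemma is_perm_iff: "is_perm p \<longleftrightarrow> distinct p \<and> set p = {1..length p}"
proof
  assume p: "is_perm p"
  then obtain M where M: "set p = {1..M}"
    unfolding is_perm_def cay_iff_set_eq by blast
  moreover have "length p = M"
    using p M distinct_card[of p] unfolding is_perm_def by simp
  ultimately show "distinct p \<and> set p = {1..length p}"
    using p unfolding is_perm_def by simp
qed (auto simp: is_perm_def cay_iff_set_eq)

lemma is_perm_map_Suc_iff: "is_perm (map Suc L) \<longleftrightarrow> distinct L \<and> set L = {0..<length L}"
proof -
  have "{1..length L} = Suc ` {0..<length L}"
    by (simp add: atLeastLessThanSuc_atLeastAtMost)
  moreover have "Suc ` set L = Suc ` {0..<length L} \<longleftrightarrow> set L = {0..<length L}"
    using inj_Suc by (rule inj_image_eq_iff)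
  ultimately show ?thesis
    unfolding is_perm_iff set_map length_map by (simp add: distinct_map del: image_Suc_atLeastLessThan)
qed

lemma is_perm_obtain_map_Suc:
  assumes "is_perm p"
  obtains L where "p = map Suc L" "distinct L" "set L = {0..<length L}"
proof
  show "p = map Suc (map (\<lambda>c. c - 1) p)"
    using assms unfolding is_perm_iff by (auto intro: map_idI[symmetric])
  then show "distinct (map (\<lambda>c. c - 1) p)"
    "set (map (\<lambda>c. c - 1) p) = {0..<length (map (\<lambda>c. c - 1) p)}"
    using assms is_perm_map_Suc_iff by metis+
qed

lemma fishburn_map_Suc_iff:
  "fishburn (map Suc L) \<longleftrightarrow> is_perm (map Suc L) \<and> fishburn_free L"
  unfolding fishburn_def fishburn_free_def by (auto 0 4)

lemma not_first_occurrence_if_pred_later: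
  assumes "first_occurrences_at_ascents x" "p < length x" "p \<noteq> 0"
    and "gamma_key x p < gamma_key x (p - 1)"
  shows "\<not> first_occurrence x p"
proof -
  have "x ! p \<le> x ! (p - 1)"
    using assms(4) gamma_key_less_iff[of p x "p - 1"] assms(2)
    by (simp add: less_imp_diff_less) (metis le_eq_less_or_eq)
  then show ?thesis
    using assms(1-3) unfolding first_occurrences_at_ascents_def by auto
qed

lemma fishburn_free_gamma0:
  assumes "first_occurrences_at_ascents x"
  shows "fishburn_free (gamma0 x)"
  unfolding fishburn_free_def
proof
  let ?L = "gamma0 x" and ?key = "gamma_key x"
  have key_less: "?key (?L ! s) < ?key (?L ! t) \<longleftrightarrow> s < t" if "s < length x" "t < length x" for s t
    using gamma0_nth_less_iff that by simp
  assume "\<exists>i k. Suc i < k \<and> k < length ?L \<and> ?L ! i < ?L ! Suc i \<and> ?L ! k + 1 = ?L ! i"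
  then obtain i k where ik: "Suc i < k" "k < length x" "?L ! i < ?L ! Suc i" "?L ! k + 1 = ?L ! i"
    by auto
  define p q where "p = ?L ! i" and "q = ?L ! Suc i"
  have pq: "p < length x" "q < length x" "p < q" "p \<noteq> 0" "?L ! k = p - 1"
    using ik gamma0_nth_less_length[of _ x] unfolding p_def q_def by auto
  have "?key p < ?key (p - 1)"
    using key_less[of i k] ik pq unfolding p_def by simp
  then obtain p' where p': "p' < p" "x ! p' = x ! p"
    using not_first_occurrence_if_pred_later[OF assms pq(1,4)] unfolding first_occurrence_def by auto
  have "p' \<in> set ?L"
    using p'(1) pq(1) by simp
  then obtain t where t: "t < length x" "?L ! t = p'"
    by (metis in_set_conv_nth length_gamma0)
  have "?key p < ?key p'"
    using gamma_key_less_iff[of p x p'] p' pq by simp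
  then have "i < t"
    using key_less[of i t] t ik unfolding p_def by simp
  moreover have "t \<noteq> Suc i"
    using t p' pq unfolding q_def by auto
  ultimately have "?key q < ?key p'"
    using key_less[of "Suc i" t] t ik unfolding q_def by simp
  then have "x ! q \<le> x ! p"
    using gamma_key_less_iff[of q x p'] pq p' by auto
  moreover have "?key p < ?key q"
    using key_less[of i "Suc i"] ik unfolding p_def q_def by simp
  then have "x ! p < x ! q"
    using gamma_key_less_iff[of p x q] pq by auto
  ultimately show False
    by simp
qed

lemma fishburn_gamma:
  assumes "first_occurrences_at_ascents x"
  shows "fishburn (gamma x)"
  unfolding gamma_eq_map_Suc_gamma0 fishburn_map_Suc_iff is_perm_map_Suc_iff
  using fishburn_free_gamma0[OF assms] by simp

lemma fishburn_free_remove_max: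
  assumes "distinct (A @ m # B)" "\<forall>r\<in>set (A @ m # B). r \<le> m" "fishburn_free (A @ m # B)"
  shows "fishburn_free (A @ B)"
  unfolding fishburn_free_def
proof
  let ?L = "A @ m # B" and ?e = "\<lambda>j. if j < length A then j else Suc j"
  have nth_e: "(A @ B) ! j = ?L ! ?e j" for j
    by (simp add: nth_append Suc_diff_le)
  assume "\<exists>i k. Suc i < k \<and> k < length (A @ B) \<and> (A @ B) ! i < (A @ B) ! Suc i \<and>
    (A @ B) ! k + 1 = (A @ B) ! i"
  then obtain i k where ik: "Suc i < k" "k < length (A @ B)" "(A @ B) ! i < (A @ B) ! Suc i"
    "(A @ B) ! k + 1 = (A @ B) ! i"
    by blast
  have "\<exists>i' k'. Suc i' < k' \<and> k' < length ?L \<and> ?L ! i' < ?L ! Suc i' \<and> ?L ! k' + 1 = ?L ! i'"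
  proof (cases "Suc i = length A")
    case True
    have "?L ! i \<in> set A"
      using True by (simp add: nth_append)
    then have "?L ! i \<noteq> m" "?L ! i \<le> m"
      using assms(1,2) by auto
    then have "?L ! i < ?L ! Suc i"
      using True by (simp add: nth_append)
    then show ?thesis
      using ik True nth_e[of i] nth_e[of k] by (intro exI[of _ i] exI[of _ "Suc k"]) auto
  next
    case False
    then have "?e (Suc i) = Suc (?e i)"
      by auto
    then show ?thesis
      using ik nth_e[of i] nth_e[of "Suc i"] nth_e[of k]
      by (intro exI[of _ "?e i"] exI[of _ "?e k"]) auto
  qed
  then show False
    using assms(3) unfolding fishburn_free_def by blast
qed

lemma fishburn_free_pred_last_before_max:
  assumes "distinct (A @ m # B)" "set (A @ m # B) = {0..<Suc m}" "fishburn_free (A @ m # B)"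
    and "A \<noteq> []"
  shows "last A = 0 \<or> last A - 1 \<in> set A"
proof (rule ccontr)
  let ?L = "A @ m # B" and ?i = "length A - 1"
  assume "\<not> (last A = 0 \<or> last A - 1 \<in> set A)"
  then have pred: "last A \<noteq> 0" "last A - 1 \<notin> set A"
    by auto
  have "last A \<in> set A" "m \<notin> set A"
    using assms(1,4) by auto
  then have "last A \<le> m" "last A \<noteq> m"
    using assms(2) by auto
  then have "last A - 1 \<in> set ?L - {m}"
    unfolding assms(2) by auto
  then obtain j where j: "j < length B" "B ! j = last A - 1"
    using pred(2) by (auto simp: in_set_conv_nth)
  have "Suc ?i < length A + 1 + j \<and> length A + 1 + j < length ?L \<and> ?L ! ?i < ?L ! Suc ?i \<and>
      ?L ! (length A + 1 + j) + 1 = ?L ! ?i"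
    using j assms(4) pred(1) \<open>last A \<le> m\<close> \<open>last A \<noteq> m\<close>
    by (simp add: nth_append last_conv_nth)
  then show False
    using assms(3) unfolding fishburn_free_def by blast
qed

lemma gamma0_last_first_occurrence:
  assumes "first_occurrences_at_ascents v" "gamma0 v = A @ B" "A \<noteq> []"
    and "last A = 0 \<or> last A - 1 \<in> set A"
  shows "first_occurrence v (last A)"
proof (cases "last A = 0")
  case False
  have p: "last A < length v"
    using set_gamma0[of v] assms(2,3) last_in_set[of A] by (metis UnI1 atLeastLessThan_iff set_append)
  have "gamma_key v (last A - 1) < gamma_key v (last A)"
    using gamma_key_less_last(1)[OF assms(2,3)] assms(4) False by simp
  then have "v ! (last A - 1) < v ! last A"
    using gamma_key_less_iff[of "last A - 1" v "last A"] p by (auto simp: less_imp_diff_less)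
  then show ?thesis
    using assms(1) p unfolding first_occurrences_at_ascents_def by simp
qed (simp add: first_occurrence_def)

lemma gamma0_last_separates:
  assumes "first_occurrences_at_ascents v" "gamma0 v = A @ B" "A \<noteq> []"
    and "last A = 0 \<or> last A - 1 \<in> set A"
  shows "\<forall>i\<in>set A. v ! i \<le> v ! last A" "\<forall>j\<in>set B. v ! last A < v ! j"
proof -
  have lt: "i < length v" if "i \<in> set A \<union> set B" for i
    using that set_gamma0[of v] assms(2) by auto
  have p: "last A < length v"
    using lt assms(3) by simp
  show "\<forall>i\<in>set A. v ! i \<le> v ! last A"
  proof
    fix i assume "i \<in> set A"
    then have "i = last A \<or> gamma_key v i < gamma_key v (last A)" "i < length v"
      using gamma_key_less_last(1)[OF assms(2,3)] lt by auto
    then show "v ! i \<le> v ! last A"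
      using gamma_key_less_iff[of i v "last A"] p by auto
  qed
  show "\<forall>j\<in>set B. v ! last A < v ! j"
  proof
    fix j assume "j \<in> set B"
    then have "v ! last A < v ! j \<or> (v ! last A = v ! j \<and> j < last A)"
      using gamma_key_less_last(2)[OF assms(2,3)] gamma_key_less_iff[of "last A" v j] p lt by simp
    then show "v ! last A < v ! j"
      using gamma0_last_first_occurrence[OF assms] unfolding first_occurrence_def by auto
  qed
qed

lemma modasc_shape_separating_value:
  assumes "modasc_shape v" "v \<noteq> []" "gamma0 v = A @ B"
    and "A \<noteq> [] \<Longrightarrow> last A = 0 \<or> last A - 1 \<in> set A"
  obtains a where "1 \<le> a" "a \<le> 2 + asc v" "\<forall>i\<in>set A. v ! i < a" "\<forall>j\<in>set B. a \<le> v ! j"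
proof -
  obtain M where v: "first_occurrences_at_ascents v" "set v = {1..M}" "M = Suc (asc v)"
    using assms(1,2) by (rule modasc_shapeE)
  have letter: "v ! i \<in> {1..M}" if "i \<in> set A \<union> set B" for i
    using that set_gamma0[of v] assms(3) v(2) by (metis atLeastLessThan_iff nth_mem set_append)
  show ?thesis
  proof (cases "A = []")
    case True
    show ?thesis
      by (rule that[of 1]) (use True letter v(3) in auto)
  next
    case False
    note sep = gamma0_last_separates[OF v(1) assms(3) False assms(4)[OF False]]
    have "v ! last A \<le> M"
      using letter[of "last A"] False by simp
    show ?thesis
      by (rule that[of "Suc (v ! last A)"]) (use sep \<open>v ! last A \<le> M\<close> v(3) in auto)
  qed
qed

lemma modasc_snoc_gamma0:
  assumes "v \<in> modasc (Suc n)" "gamma0 v = A @ B"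
    and "1 \<le> a" "a \<le> 2 + asc v" "\<forall>i\<in>set A. v ! i < a" "\<forall>j\<in>set B. a \<le> v ! j"
  shows "\<exists>x\<in>modasc (Suc (Suc n)). gamma0 x = A @ Suc n # B"
proof (cases "a \<le> last v")
  case True
  have "v @ [a] \<in> modasc (Suc (Suc n))"
    using assms(1,3) True by auto
  moreover have "gamma0 (v @ [a]) = A @ Suc n # B"
    using gamma0_snoc[OF assms(2,5,6)] modasc_length[OF assms(1)] by simp
  ultimately show ?thesis
    by blast
next
  case False
  let ?w = "incr_from a v"
  have "?w @ [a] \<in> modasc (Suc (Suc n))"
    using assms(1,4) False unfolding modasc.simps
    by (intro CollectI bexI[of _ v] exI[of _ a]) auto
  moreover have "gamma0 (?w @ [a]) = A @ Suc n # B"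
  proof -
    have "i < length v" if "i \<in> set A \<union> set B" for i
      using that set_gamma0[of v] assms(2) by auto
    then have "\<forall>i\<in>set A. ?w ! i < a" "\<forall>j\<in>set B. a \<le> ?w ! j"
      using assms(5,6) by (auto simp: incr_from_def)
    moreover have "gamma0 ?w = A @ B"
      using gamma0_order_equiv[OF order_equiv_incr_from] assms(2) by simp
    ultimately show ?thesis
      using gamma0_snoc modasc_length[OF assms(1)] by (simp add: incr_from_def)
  qed
  ultimately show ?thesis
    by blast
qed

lemma modasc_gamma0_surj:
  "length L = n \<Longrightarrow> distinct L \<Longrightarrow> set L = {0..<n} \<Longrightarrow> fishburn_free L \<Longrightarrow>
    \<exists>x\<in>modasc n. gamma0 x = L"
proof (induction n arbitrary: L rule: modasc.induct)
  case 1
  then show ?case by (simp add: gamma0_def)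
next
  case 2
  then have "L = [0]"
    by (cases L) auto
  then show ?case
    by (simp add: gamma0_def)
next
  case (3 n)
  then have "Suc n \<in> set L"
    by simp
  then obtain A B where L: "L = A @ Suc n # B"
    by (blast dest: split_list)
  have max: "\<forall>r\<in>set (A @ Suc n # B). r \<le> Suc n"
    using "3.prems"(3) unfolding L[symmetric] by (simp add: less_Suc_eq_le)
  have "set (A @ B) = set L - {Suc n}"
    using "3.prems"(2) L by auto
  also have "\<dots> = {0..<Suc n}"
    using "3.prems"(3) by (simp add: atLeastLessThanSuc)
  finally have "set (A @ B) = {0..<Suc n}" .
  moreover have "length (A @ B) = Suc n" "distinct (A @ B)"
    using "3.prems"(1,2) L by simp_all
  moreover have "fishburn_free (A @ B)"
    using fishburn_free_remove_max[of A "Suc n" B] "3.prems"(2,4) L max by simp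
  ultimately obtain v where v: "v \<in> modasc (Suc n)" "gamma0 v = A @ B"
    using "3.IH" by blast
  have "last A = 0 \<or> last A - 1 \<in> set A" if "A \<noteq> []"
    using fishburn_free_pred_last_before_max[of A "Suc n" B] "3.prems"(2-4) L that by simp
  moreover have "v \<noteq> []"
    using modasc_length[OF v(1)] by auto
  ultimately obtain a where
    "1 \<le> a" "a \<le> 2 + asc v" "\<forall>i\<in>set A. v ! i < a" "\<forall>j\<in>set B. a \<le> v ! j"
    using modasc_shape_separating_value[OF modasc_imp_modasc_shape[OF v(1)] _ v(2)] by blast
  then show ?case
    using modasc_snoc_gamma0[OF v] L by blast
qed

lemma gamma_Modasc: "gamma ` Modasc = {p. fishburn p}"
proof (intro equalityI subsetI)
  fix p assume "p \<in> gamma ` Modasc"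
  then show "p \<in> {p. fishburn p}"
    using modasc_imp_modasc_shape fishburn_gamma unfolding Modasc_def modasc_shape_def by blast
next
  fix p assume "p \<in> {p. fishburn p}"
  then have "fishburn p" "is_perm p"
    unfolding fishburn_def by auto
  then obtain L where L: "p = map Suc L" "distinct L" "set L = {0..<length L}" "fishburn_free L"
    using fishburn_map_Suc_iff by (metis is_perm_obtain_map_Suc)
  then obtain x where "x \<in> modasc (length L)" "gamma0 x = L"
    using modasc_gamma0_surj by blast
  then have "x \<in> Modasc" "gamma x = p"
    unfolding Modasc_def using L(1) gamma_eq_map_Suc_gamma0 by auto
  then show "p \<in> gamma ` Modasc"
    by blast
qed

section \<open>Patterns\<close>

lemma contains_iff_order_equiv:
  "contains z x \<longleftrightarrow>
    (\<exists>ix. sorted_wrt (<) ix \<and> (\<forall>j\<in>set ix. j < length x) \<and> order_equiv (map ((!) x) ix) z)"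
proof -
  have eq: "order_equiv (map ((!) x) ix) z \<longleftrightarrow> length ix = length z \<and>
      (\<forall>s<length z. \<forall>t<length z. (x ! (ix ! s) < x ! (ix ! t) \<longleftrightarrow> z ! s < z ! t) \<and>
         (x ! (ix ! s) = x ! (ix ! t) \<longleftrightarrow> z ! s = z ! t))" for ix
    using order_equiv_nth_eq_iff[of "map ((!) x) ix" z] by (auto simp: order_equiv_def)
  show ?thesis
    unfolding contains_def eq by blast
qed

definition standardize :: "nat list \<Rightarrow> nat list" where
  "standardize w = map (\<lambda>c. card {u \<in> set w. u < c} + 1) w"

lemma strict_mono_on_card_less:
  fixes w :: "'a::linorder list"
  shows "strict_mono_on (set w) (\<lambda>c. card {u \<in> set w. u < c} + 1)"
proof (rule strict_mono_onI)
  fix c c' assume c: "c \<in> set w" "c < c'"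
  have "{u \<in> set w. u < c} \<subseteq> {u \<in> set w. u < c'}"
    using c(2) by (auto dest: order.strict_trans)
  moreover have "c \<in> {u \<in> set w. u < c'}" "c \<notin> {u \<in> set w. u < c}"
    using c by simp_all
  ultimately have "{u \<in> set w. u < c} \<subset> {u \<in> set w. u < c'}"
    by blast
  then show "card {u \<in> set w. u < c} + 1 < card {u \<in> set w. u < c'} + 1"
    by (simp add: psubset_card_mono)
qed

lemma order_equiv_standardize: "order_equiv (standardize w) w"
  unfolding standardize_def using strict_mono_on_card_less by (rule order_equiv_map)

lemma cay_standardize: "cay (standardize w)"
proof -
  let ?g = "\<lambda>c. card {u \<in> set w. u < c} + 1"
  have "?g ` set w \<subseteq> {1..card (set w)}"
  proof
    fix r assume "r \<in> ?g ` set w"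
    then obtain c where "c \<in> set w" "r = ?g c"
      by blast
    moreover have "{u \<in> set w. u < c} \<subset> set w"
      using \<open>c \<in> set w\<close> by auto
    ultimately show "r \<in> {1..card (set w)}"
      by (simp add: psubset_card_mono Suc_le_eq)
  qed
  moreover have "card (?g ` set w) = card {1..card (set w)}"
    using card_image[OF strict_mono_on_imp_inj_on[OF strict_mono_on_card_less[of w]]] by simp
  ultimately have "set (standardize w) = {1..card (set w)}"
    unfolding standardize_def by (simp add: card_subset_eq)
  then show ?thesis
    unfolding cay_iff_set_eq by blast
qed

lemma strict_mono_on_nth:
  assumes "sorted_wrt (<) ix"
  shows "strict_mono_on {0..<length ix} ((!) ix)"
  using sorted_wrt_nth_less[OF assms] by (auto intro: strict_mono_onI)

lemma order_equiv_map_nth_gamma0: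
  assumes "sorted_wrt (<) ix" "length z = length ix"
  shows "order_equiv (map ((!) ix) (gamma0 z)) (gamma0 z)"
  using strict_mono_on_nth[OF assms(1)] assms(2) by (intro order_equiv_map) simp

lemma gamma_key_subseq_less_iff:
  assumes "sorted_wrt (<) ix" "\<forall>j\<in>set ix. j < length x" "c < length ix" "c' < length ix"
  shows "gamma_key (map ((!) x) ix) c < gamma_key (map ((!) x) ix) c' \<longleftrightarrow>
    gamma_key x (ix ! c) < gamma_key x (ix ! c')"
proof -
  have "ix ! c' < ix ! c \<longleftrightarrow> c' < c"
    using sorted_wrt_nth_less_iff[of "\<lambda>i. i" ix c' c] assms(1,3,4) by simp
  then show ?thesis
    using assms(2-4) gamma_key_less_iff[of c "map ((!) x) ix" c']
      gamma_key_less_iff[of "ix ! c" x "ix ! c'"]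
    by simp
qed

lemma gamma0_subseq:
  assumes "sorted_wrt (<) ix" "\<forall>j\<in>set ix. j < length x"
  shows "map ((!) ix) (gamma0 (map ((!) x) ix)) = filter (\<lambda>j. j \<in> set ix) (gamma0 x)"
proof (rule sorted_wrt_key_unique)
  let ?w = "map ((!) x) ix"
  show "inj_on (gamma_key x) (set (filter (\<lambda>j. j \<in> set ix) (gamma0 x)))"
    using inj_on_gamma_key by (rule inj_on_subset) auto
  have "(!) ix ` {0..<length ix} = set ix"
    by (metis list.set_map map_nth set_upt)
  then show "set (map ((!) ix) (gamma0 ?w)) = set (filter (\<lambda>j. j \<in> set ix) (gamma0 x))"
    using assms(2) by auto
  show "sorted_wrt (\<lambda>i j. gamma_key x i < gamma_key x j) (filter (\<lambda>j. j \<in> set ix) (gamma0 x))"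
    by (rule sorted_wrt_filter) (rule sorted_wrt_gamma0)
  have "sorted_wrt (\<lambda>c c'. gamma_key x (ix ! c) < gamma_key x (ix ! c')) (gamma0 ?w)"
    using sorted_wrt_gamma0[of ?w]
    by (rule sorted_wrt_mono_rel[rotated]) (simp add: gamma_key_subseq_less_iff[OF assms])
  then show "sorted_wrt (\<lambda>i j. gamma_key x i < gamma_key x j) (map ((!) ix) (gamma0 ?w))"
    by (simp add: sorted_wrt_map)
qed

lemma filter_eq_map_nth: "filter P xs = map ((!) xs) (filter (\<lambda>i. P (xs ! i)) [0..<length xs])"
proof -
  have "filter P (map ((!) xs) [0..<length xs]) =
      map ((!) xs) (filter (P \<circ> (!) xs) [0..<length xs])"
    by (rule filter_map)
  then show ?thesis
    by (simp add: map_nth comp_def)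
qed

lemma map_nth_eq_filter:
  assumes "distinct L" "sorted_wrt (<) ps" "\<forall>p\<in>set ps. p < length L"
  shows "map ((!) L) ps = filter (\<lambda>j. j \<in> (!) L ` set ps) L"
proof -
  have "filter (\<lambda>i. L ! i \<in> (!) L ` set ps) [0..<length L] =
      filter (\<lambda>i. i \<in> set ps) [0..<length L]"
    using assms(1,3) by (intro filter_cong) (auto simp: nth_eq_iff_index_eq)
  also have "\<dots> = ps"
    using assms(2,3) by (intro strict_sorted_equal) (auto intro: sorted_wrt_filter)
  finally show ?thesis
    by (simp add: filter_eq_map_nth[of _ L])
qed

lemma map_nth_gamma:
  "\<forall>p\<in>set ps. p < length x \<Longrightarrow> map ((!) (gamma x)) ps = map Suc (map ((!) (gamma0 x)) ps)"
  by (simp add: nth_gamma)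

lemma contains_gamma:
  assumes "contains z x"
  shows "contains (gamma z) (gamma x)"
proof -
  obtain ix where ix: "sorted_wrt (<) ix" "\<forall>j\<in>set ix. j < length x"
    and z: "order_equiv (map ((!) x) ix) z"
    using assms unfolding contains_iff_order_equiv by blast
  have len: "length z = length ix"
    using z by (simp add: order_equiv_def)
  define ps where "ps = filter (\<lambda>p. gamma0 x ! p \<in> set ix) [0..<length x]"
  have ps: "sorted_wrt (<) ps" "\<forall>p\<in>set ps. p < length x"
    unfolding ps_def by (auto intro: sorted_wrt_filter)
  have "map ((!) (gamma0 x)) ps = filter (\<lambda>j. j \<in> set ix) (gamma0 x)"
    unfolding ps_def by (simp add: filter_eq_map_nth[of _ "gamma0 x"])
  also have "\<dots> = map ((!) ix) (gamma0 z)"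
    using gamma0_subseq[OF ix] gamma0_order_equiv[OF z] by simp
  finally have "order_equiv (map ((!) (gamma0 x)) ps) (gamma0 z)"
    using order_equiv_map_nth_gamma0[OF ix(1) len] by simp
  then have "order_equiv (map ((!) (gamma x)) ps) (gamma z)"
    by (simp only: map_nth_gamma[OF ps(2)] gamma_eq_map_Suc_gamma0[of z] order_equiv_map_Suc_iff)
  then show ?thesis
    unfolding contains_iff_order_equiv using ps by auto
qed

lemma contains_gammaE:
  assumes "contains (gamma y) (gamma x)"
  obtains z where "cay z" "gamma z = gamma y" "contains z x"
proof -
  obtain ps where ps: "sorted_wrt (<) ps" "\<forall>p\<in>set ps. p < length x"
    and "order_equiv (map ((!) (gamma x)) ps) (gamma y)"
    using assms unfolding contains_iff_order_equiv by auto
  then have ps_y: "order_equiv (map ((!) (gamma0 x)) ps) (gamma0 y)"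
    by (simp only: map_nth_gamma[OF ps(2)] gamma_eq_map_Suc_gamma0[of y] order_equiv_map_Suc_iff)
  define ix where "ix = sorted_list_of_set ((!) (gamma0 x) ` set ps)"
  have ix: "sorted_wrt (<) ix" "set ix = (!) (gamma0 x) ` set ps"
    unfolding ix_def by simp_all
  then have ix_less: "\<forall>j\<in>set ix. j < length x"
    using ps(2) gamma0_nth_less_length by auto
  let ?w = "map ((!) x) ix"
  have "map ((!) ix) (gamma0 ?w) = filter (\<lambda>j. j \<in> set ix) (gamma0 x)"
    by (rule gamma0_subseq[OF ix(1) ix_less])
  also have "\<dots> = map ((!) (gamma0 x)) ps"
    using map_nth_eq_filter[of "gamma0 x" ps] ps ix(2) by simp
  finally have "order_equiv (map ((!) ix) (gamma0 ?w)) (gamma0 y)"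
    using ps_y by simp
  with order_equiv_sym[OF order_equiv_map_nth_gamma0[OF ix(1)]]
  have "order_equiv (gamma0 ?w) (gamma0 y)"
    by (rule order_equiv_trans) simp
  then have "gamma0 ?w = gamma0 y"
    by (rule order_equiv_perm_eq) simp_all
  then have "gamma (standardize ?w) = gamma y"
    using gamma0_order_equiv[OF order_equiv_standardize] by (simp add: gamma_eq_map_Suc_gamma0)
  moreover have "contains (standardize ?w) x"
    unfolding contains_iff_order_equiv
    using ix(1) ix_less order_equiv_sym[OF order_equiv_standardize] by blast
  ultimately show ?thesis
    using that cay_standardize by blast
qed

lemma avoid_cls_iff: "x \<in> avoid_cls E y \<longleftrightarrow> x \<in> E \<and> avoids (gamma x) (gamma y)"
proof -
  have "(\<exists>z\<in>cls y. contains z x) \<longleftrightarrow> contains (gamma y) (gamma x)"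
  proof
    assume "\<exists>z\<in>cls y. contains z x"
    then obtain z where "gamma z = gamma y" "contains z x"
      unfolding cls_def by blast
    then show "contains (gamma y) (gamma x)"
      using contains_gamma by fastforce
  next
    assume "contains (gamma y) (gamma x)"
    then obtain z where "cay z" "gamma z = gamma y" "contains z x"
      by (rule contains_gammaE)
    then show "\<exists>z\<in>cls y. contains z x"
      unfolding cls_def Cay_def by blast
  qed
  then show ?thesis
    unfolding avoid_cls_def avoids_def by blast
qed

lemma gamma_perm_inv:
  assumes "is_perm \<sigma>"
  shows "gamma (perm_inv \<sigma>) = \<sigma>"
proof -
  obtain L where L: "\<sigma> = map Suc L" "distinct L" "set L = {0..<length L}"
    using assms by (rule is_perm_obtain_map_Suc)
  let ?\<tau> = "perm_inv \<sigma>"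
  have L_less: "L ! s < length L" if "s < length L" for s
    using L(3) that nth_mem by fastforce
  have "(THE i. i < length \<sigma> \<and> \<sigma> ! i = \<sigma> ! s) = s" if "s < length \<sigma>" for s
    using L(1,2) that by (intro the_equality) (auto simp: nth_eq_iff_index_eq distinct_map)
  then have \<tau>: "?\<tau> ! (L ! s) = Suc s" if "s < length L" for s
    using that L(1) L_less[OF that] unfolding perm_inv_def by (simp del: upt_Suc)
  have len: "length ?\<tau> = length L"
    using L(1) by (simp add: perm_inv_def del: upt_Suc)
  have "gamma0 ?\<tau> = L"
  proof (rule gamma0_eqI)
    show "set L = {0..<length ?\<tau>}"
      using L(3) len by simp
    show "sorted_wrt (\<lambda>i j. gamma_key ?\<tau> i < gamma_key ?\<tau> j) L"
      unfolding sorted_wrt_iff_nth_less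
      using \<tau> L_less len gamma_key_less_iff by simp
  qed
  then show ?thesis
    using L(1) gamma_eq_map_Suc_gamma0 by simp
qed

theorem theorem5p1:
  shows "(\<forall>\<sigma>. is_perm \<sigma> \<longrightarrow> Fish_av \<sigma> = gamma ` avoid_cls Modasc (perm_inv \<sigma>)) \<and>
         (\<forall>y. cay y \<longrightarrow> gamma ` avoid_cls Modasc y = Fish_av (gamma y))"
proof -
  have avoiding: "gamma ` avoid_cls Modasc y = Fish_av (gamma y)" for y
  proof -
    have "avoid_cls Modasc y = {x \<in> Modasc. avoids (gamma x) (gamma y)}"
      using avoid_cls_iff by blast
    then have "gamma ` avoid_cls Modasc y = {p \<in> gamma ` Modasc. avoids p (gamma y)}"
      by auto
    also have "\<dots> = Fish_av (gamma y)"
      unfolding gamma_Modasc Fish_av_def by blast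
    finally show ?thesis .
  qed
  then show ?thesis
    by (simp add: gamma_perm_inv)
qed

end
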